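(* Model $\mathbb{H}^2\times\mathbb{R}$ as $\{(x_1,x_2,x_3,x_4)\in\mathbb{L}^4:-x_1^2+x_2^2+x_3^2=-1,\ x_1>0\}$. Let $K>0$ be a constant and let $S$ be a complete immersed sphere of revolution about the vertical axis $\{(1,0,0)\}\times\mathbb{R}$ with constant extrinsic curvature $K$, parametrized by $\psi_K(u,v)=(\cosh k(u),\sinh k(u)\cos v,\sinh k(u)\sin v,h(u))$ with generating curve $\alpha(u)=(\cosh k(u),\sinh k(u),0,h(u))$, where $k\ge0$ and the parameter $u$ equals $dk/ds$ for $s$ the arc length of the profile curve (oriented so that $s=0$ is the lowest point). Then $S$ is embedded, and for $-1\le u\le1$, $$k(u)=\cosh^{-1}\exp\!\left(\frac{1-u^2}{2K}\right),\qquad h(u)=-\frac1K\int_1^u\frac{\sqrt{1-w^2}}{\sqrt{1-\exp\!\left(-\frac{1-w^2}{K}\right)}}\,dw+C$$ for some real constant $C$. Moreover, the slice $\mathbb{H}^2\times\{h_0\}$ with $h_0=\frac1K\int_{-1}^0\frac{\sqrt{1-w^2}}{\sqrt{1-\exp(-\frac{1-w^2}{K})}}\,dw+C$ divides $S$ into two symmetric (upper and lower) parts.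
   Context: $\mathbb{L}^4$ is $\mathbb{R}^4$ with the metric $-dx_1^2+dx_2^2+dx_3^2+dx_4^2$; the induced metric on the given submanifold is the product metric of $\mathbb{H}^2\times\mathbb{R}$. The extrinsic curvature of a surface is $K=\det(II)/\det(I)$. *)

theory Defs
  imports "HOL-Analysis.Analysis"
begin

type_synonym R4 = "real \<times> real \<times> real \<times> real"

definition lor :: "R4 \<Rightarrow> R4 \<Rightarrow> real" where
  "lor a b = (case a of (a1,a2,a3,a4) \<Rightarrow> case b of (b1,b2,b3,b4) \<Rightarrow>
              - a1*b1 + a2*b2 + a3*b3 + a4*b4)"

definition H2R :: "R4 set" where
  "H2R = {p. case p of (a1,a2,a3,a4) \<Rightarrow> a2^2 + a3^2 - a1^2 = -1 \<and> a1 > 0}"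

definition x4 :: "R4 \<Rightarrow> real" where "x4 p = snd (snd (snd p))"

text \<open>The H^2-component (x1,x2,x3,0): the unit normal of H^2 x R in L^4 at p;
  a vector X is tangent to H^2 x R at p iff lor X (hpart p) = 0.\<close>
definition hpart :: "R4 \<Rightarrow> R4" where
  "hpart p = (case p of (a1,a2,a3,a4) \<Rightarrow> (a1,a2,a3,0))"

definition d1 :: "(real \<Rightarrow> real \<Rightarrow> R4) \<Rightarrow> real \<Rightarrow> real \<Rightarrow> R4" where
  "d1 \<psi> s v = vector_derivative (\<lambda>t. \<psi> t v) (at s)"
definition d2 :: "(real \<Rightarrow> real \<Rightarrow> R4) \<Rightarrow> real \<Rightarrow> real \<Rightarrow> R4" where
  "d2 \<psi> s v = vector_derivative (\<lambda>t. \<psi> s t) (at v)"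

text \<open>Extrinsic curvature of a parametrized surface psi in H^2 x R at the parameter
  (s,v) equals K: K = det(II)/det(I), where I is the induced (Lorentzian) first
  fundamental form and II is the second fundamental form with respect to a unit normal N
  of the surface tangent to H^2 x R (unique up to sign, so det(II) is independent of
  the choice).\<close>
definition ext_curv_at :: "(real \<Rightarrow> real \<Rightarrow> R4) \<Rightarrow> real \<Rightarrow> real \<Rightarrow> real \<Rightarrow> bool" where
  "ext_curv_at \<psi> s v K \<longleftrightarrow>
     (let E = lor (d1 \<psi> s v) (d1 \<psi> s v);
          F = lor (d1 \<psi> s v) (d2 \<psi> s v);
          G = lor (d2 \<psi> s v) (d2 \<psi> s v)
      in E * G - F^2 \<noteq> 0 \<and>
         (\<exists>N. lor N N = 1 \<and> lor N (d1 \<psi> s v) = 0 \<and> lor N (d2 \<psi> s v) = 0 \<and>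
              lor N (hpart (\<psi> s v)) = 0 \<and>
              (let L = lor (d1 (d1 \<psi>) s v) N;
                   M = lor (d2 (d1 \<psi>) s v) N;
                   P = lor (d2 (d2 \<psi>) s v) N
               in (L * P - M^2) / (E * G - F^2) = K)))"

definition smooth_on :: "real set \<Rightarrow> (real \<Rightarrow> real) \<Rightarrow> bool" where
  "smooth_on U f \<longleftrightarrow> (\<forall>n. \<forall>x\<in>U. (deriv ^^ n) f differentiable (at x))"

definition rot_param :: "(real \<Rightarrow> real) \<Rightarrow> (real \<Rightarrow> real) \<Rightarrow> real \<Rightarrow> real \<Rightarrow> R4" where
  "rot_param k h s v = (cosh (k s), sinh (k s) * cos v, sinh (k s) * sin v, h s)"

definition hint :: "real \<Rightarrow> real \<Rightarrow> real" where
  "hint K w = sqrt (1 - w^2) / sqrt (1 - exp (- (1 - w^2) / K))"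

end

theory Submission
  imports Defs
begin

(* Write u = k' and g = h' for the derivatives of the profile functions with respect to
   the arc length s of the generating curve, so that u^2 + g^2 = 1.  The argument has
   three parts.
   (1) Geometry: for the rotational parametrization the unit normal tangent to H^2 x R
       is determined up to sign, and the curvature condition det(II)/det(I) = K becomes
       the ODE  u' = -K sinh k / cosh k  on the open profile.
   (2) Analysis of the ODE: u is strictly decreasing from 1 to -1 (so s -> u is a
       bijection onto [-1,1]), ln (cosh k) + u^2/(2K) is a first integral, which gives k
       as a function of u, and h is strictly increasing with h' = sqrt (1 - u^2); by the
       chain rule h - (1/K) * (integral from u to 1 of the integrand hint K) is constant.
   (3) Consequences: since the integrand is even, the points with parameters u and -u
       have the same k and heights symmetric about h0, which yields the symmetry of S
       about the slice at height h0; strict monotonicity of h yields embeddedness. *)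

lemma smooth_on_DERIV:
  assumes "smooth_on U f" "x \<in> U"
  shows "(f has_real_derivative deriv f x) (at x)"
    and "(deriv f has_real_derivative deriv (deriv f) x) (at x)"
proof -
  have "(deriv ^^ 0) f differentiable (at x)" "(deriv ^^ 1) f differentiable (at x)"
    using assms unfolding smooth_on_def by blast+
  then show "(f has_real_derivative deriv f x) (at x)"
    "(deriv f has_real_derivative deriv (deriv f) x) (at x)"
    by (simp_all add: DERIV_deriv_iff_real_differentiable)
qed

lemma smooth_on_continuous_on:
  assumes "smooth_on U f" "A \<subseteq> U"
  shows "continuous_on A f" and "continuous_on A (deriv f)"
  using assms smooth_on_DERIV[OF assms(1)]
  by (auto intro!: continuous_at_imp_continuous_on DERIV_isCont)

lemma has_vector_derivative_R4:
  assumes "(f1 has_real_derivative a) (at x)" "(f2 has_real_derivative b) (at x)"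
    "(f3 has_real_derivative c) (at x)" "(f4 has_real_derivative d) (at x)"
  shows "((\<lambda>t. (f1 t, f2 t, f3 t, f4 t)) has_vector_derivative (a, b, c, d)) (at x)"
  using assms by (simp add: has_real_derivative_iff_has_vector_derivative has_vector_derivative_Pair)

lemma d1_rot_param:
  assumes k: "\<And>x. x \<in> U \<Longrightarrow> (k has_real_derivative deriv k x) (at x)"
    and h: "\<And>x. x \<in> U \<Longrightarrow> (h has_real_derivative deriv h x) (at x)"
    and s: "s \<in> U"
  shows "d1 (rot_param k h) s v = (sinh (k s) * deriv k s, cosh (k s) * deriv k s * cos v,
      cosh (k s) * deriv k s * sin v, deriv h s)"
  unfolding d1_def rot_param_def
  by (intro vector_derivative_at has_vector_derivative_R4) (auto intro!: derivative_eq_intros k h s)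

lemma d2_rot_param:
  "d2 (rot_param k h) s v = (0, - sinh (k s) * sin v, sinh (k s) * cos v, 0)"
  unfolding d2_def rot_param_def
  by (intro vector_derivative_at has_vector_derivative_R4) (auto intro!: derivative_eq_intros)

lemma d2d2_rot_param:
  "d2 (d2 (rot_param k h)) s v = (0, - sinh (k s) * cos v, - sinh (k s) * sin v, 0)"
  unfolding d2_rot_param unfolding d2_def
  by (intro vector_derivative_at has_vector_derivative_R4) (auto intro!: derivative_eq_intros)

lemma d2d1_rot_param:
  assumes k: "\<And>x. x \<in> U \<Longrightarrow> (k has_real_derivative deriv k x) (at x)"
    and h: "\<And>x. x \<in> U \<Longrightarrow> (h has_real_derivative deriv h x) (at x)"
    and s: "s \<in> U"
  shows "d2 (d1 (rot_param k h)) s v =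
    (0, - cosh (k s) * deriv k s * sin v, cosh (k s) * deriv k s * cos v, 0)"
proof -
  have d1: "d1 (rot_param k h) s = (\<lambda>v. (sinh (k s) * deriv k s, cosh (k s) * deriv k s * cos v,
      cosh (k s) * deriv k s * sin v, deriv h s))"
    using d1_rot_param[OF k h s] by blast
  show ?thesis
    unfolding d2_def d1
    by (intro vector_derivative_at has_vector_derivative_R4) (auto intro!: derivative_eq_intros)
qed

lemma d1d1_rot_param:
  assumes k: "\<And>x. x \<in> U \<Longrightarrow> (k has_real_derivative deriv k x) (at x)"
    and h: "\<And>x. x \<in> U \<Longrightarrow> (h has_real_derivative deriv h x) (at x)"
    and k2: "\<And>x. x \<in> U \<Longrightarrow> (deriv k has_real_derivative deriv (deriv k) x) (at x)"
    and h2: "\<And>x. x \<in> U \<Longrightarrow> (deriv h has_real_derivative deriv (deriv h) x) (at x)"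
    and U: "open U" and s: "s \<in> U"
  shows "d1 (d1 (rot_param k h)) s v =
      (cosh (k s) * (deriv k s)^2 + sinh (k s) * deriv (deriv k) s,
       (sinh (k s) * (deriv k s)^2 + cosh (k s) * deriv (deriv k) s) * cos v,
       (sinh (k s) * (deriv k s)^2 + cosh (k s) * deriv (deriv k) s) * sin v,
       deriv (deriv h) s)"
proof -
  have "((\<lambda>y. (sinh (k y) * deriv k y, cosh (k y) * deriv k y * cos v,
            cosh (k y) * deriv k y * sin v, deriv h y)) has_vector_derivative
      (cosh (k s) * (deriv k s)^2 + sinh (k s) * deriv (deriv k) s,
       (sinh (k s) * (deriv k s)^2 + cosh (k s) * deriv (deriv k) s) * cos v,
       (sinh (k s) * (deriv k s)^2 + cosh (k s) * deriv (deriv k) s) * sin v,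
       deriv (deriv h) s)) (at s)"
    by (rule has_vector_derivative_R4)
       (auto intro!: derivative_eq_intros k h k2 h2 s simp: power2_eq_square algebra_simps)
  then have "((\<lambda>y. d1 (rot_param k h) y v) has_vector_derivative
      (cosh (k s) * (deriv k s)^2 + sinh (k s) * deriv (deriv k) s,
       (sinh (k s) * (deriv k s)^2 + cosh (k s) * deriv (deriv k) s) * cos v,
       (sinh (k s) * (deriv k s)^2 + cosh (k s) * deriv (deriv k) s) * sin v,
       deriv (deriv h) s)) (at s)"
    by (rule has_vector_derivative_transform_within_open[OF _ U s]) (simp add: d1_rot_param[OF k h])
  then show ?thesis unfolding d1_def[of "d1 _"] by (rule vector_derivative_at)
qed

section \<open>The unit normal along the meridian\<close>

text \<open>With sh = sinh k and ch = cosh k: a vector orthogonal to the rotation field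
  (0, 0, sh, 0) and to the normal (ch, sh, 0, 0) of H^2 x R lies in the meridian plane
  spanned by (sh, ch, 0, 0) and the vertical direction.\<close>
lemma meridian_normal:
  assumes "sh \<noteq> 0" "ch \<noteq> 0"
    and "lor N (0, 0, sh, 0) = 0" "lor N (ch, sh, 0, 0) = 0"
  obtains b n where "N = (b * sh, b * ch, 0, n)"
proof -
  obtain n1 n2 n3 n4 where N: "N = (n1, n2, n3, n4)" by (cases N) auto
  have "n3 = 0" "n1 = n2 / ch * sh"
    using assms unfolding N by (auto simp: lor_def field_simps)
  then show ?thesis using that[of "n2 / ch" n4] assms(2) unfolding N by simp
qed

lemma profile_normal_curvature:
  fixes b n u g u' g' :: real
  assumes unit_normal: "b^2 + n^2 = 1" and normal: "b * u + n * g = 0"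
    and unit_speed: "u^2 + g^2 = 1" and unit_speed': "u * u' + g * g' = 0"
  shows "(b * u' + n * g') * b = u'"
proof -
  have bu: "b * u = - n * g" using normal by simp
  have b_sq: "b^2 = g^2"
  proof -
    have "b^2 = b^2 * (u^2 + g^2)" using unit_speed by simp
    also have "\<dots> = (b * u)^2 + b^2 * g^2" by (simp add: algebra_simps power_mult_distrib)
    also have "\<dots> = g^2 * (n^2 + b^2)" unfolding bu by (simp add: algebra_simps power_mult_distrib)
    finally show ?thesis using unit_normal by (simp add: add.commute)
  qed
  have bn: "b * n = - u * g"
  proof -
    have "b * n = b * n * (u^2 + g^2)" using unit_speed by simp
    also have "\<dots> = n * u * (b * u) - b * g * (- n * g)" by (simp add: algebra_simps power2_eq_square)
    also have "\<dots> = n * u * (- n * g) - b * g * (b * u)" unfolding bu ..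
    also have "\<dots> = - u * g * (n^2 + b^2)" by (simp add: algebra_simps power2_eq_square)
    finally show ?thesis using unit_normal by (simp add: add.commute)
  qed
  have "(b * u' + n * g') * b = b^2 * u' + (b * n) * g'" by (simp add: algebra_simps power2_eq_square)
  also have "\<dots> = g^2 * u' - u * (g * g')" unfolding b_sq bn by simp
  also have "\<dots> = (u^2 + g^2) * u'"
  proof -
    have "g * g' = - (u * u')" using unit_speed' by linarith
    then show ?thesis by (simp add: power2_eq_square algebra_simps)
  qed
  finally show ?thesis using unit_speed by simp
qed

section \<open>The height integrand\<close>

text \<open>hint_tail K x is the integral of the height integrand from x to 1;
  the height of the sphere is 1/K times it, evaluated at u = k'.\<close>
definition hint_tail :: "real \<Rightarrow> real \<Rightarrow> real" where
  "hint_tail K x = integral {x..1} (hint K)"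

lemma hint_even: "hint K (-w) = hint K w"
  unfolding hint_def by simp

lemma hint_nonneg:
  assumes "K > 0" "\<bar>w\<bar> \<le> 1"
  shows "hint K w \<ge> 0"
proof -
  have t: "1 - w^2 \<ge> 0" using assms(2) by (simp add: abs_square_le_1)
  then have "exp (- (1 - w^2) / K) \<le> 1" using assms(1) by (simp add: divide_nonpos_pos)
  then show ?thesis unfolding hint_def using t by simp
qed

text \<open>The integrand is bounded (its singularity at \<bar>w\<bar> = 1 is removable),
  which gives integrability on {-1..1}.\<close>
lemma hint_bounded:
  assumes K: "K > 0" and w: "\<bar>w\<bar> \<le> 1"
  shows "hint K w \<le> sqrt (K + 1)"
proof (cases "w^2 = 1")
  case True then show ?thesis unfolding hint_def using K by simp
next
  case False
  define t where "t = 1 - w^2"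
  have t: "t > 0" "t \<le> 1" using w False unfolding t_def by (auto simp: abs_square_le_1 less_le)
  have "exp (t / K) \<ge> 1 + t / K" by (rule exp_ge_add_one_self)
  then have "exp (- t / K) \<le> K / (K + t)" using K t
    by (simp add: exp_minus divide_simps mult.commute)
  then have denom: "t \<le> (K + t) * (1 - exp (- t / K))" "1 - exp (- t / K) > 0"
    using K t by (simp_all add: field_simps)
  then have "t / (1 - exp (- t / K)) \<le> K + t" by (simp add: pos_divide_le_eq mult.commute)
  then have "t / (1 - exp (- t / K)) \<le> K + 1" using t by linarith
  moreover have "hint K w = sqrt (t / (1 - exp (- t / K)))"
    unfolding hint_def t_def[symmetric] by (simp add: real_sqrt_divide)
  ultimately show ?thesis by simp
qed

lemma hint_measurable [measurable]: "hint K \<in> borel_measurable borel"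
  unfolding hint_def by measurable

lemma hint_continuous_on:
  assumes K: "K > 0"
  shows "continuous_on {-1<..<1} (hint K)"
proof -
  have "1 - exp (- (1 - w^2) / K) \<noteq> 0" if "w \<in> {-1<..<1}" for w
  proof -
    have "w^2 < 1" using that by (simp add: abs_square_less_1 abs_less_iff)
    then have "exp (- (1 - w^2) / K) < 1" using K by (simp add: divide_neg_pos)
    then show ?thesis by linarith
  qed
  then show ?thesis unfolding hint_def by (intro continuous_intros) auto
qed

lemma hint_set_integrable:
  assumes K: "K > 0" and "-1 \<le> a" "b \<le> 1"
  shows "set_integrable lborel {a..b} (hint K)"
  unfolding set_integrable_def
proof (rule integrableI_bounded_set[where A="{a..b}" and B="sqrt (K + 1)"])
  show "AE x in lborel. x \<in> {a..b} \<longrightarrow> norm (indicat_real {a..b} x *\<^sub>R hint K x) \<le> sqrt (K + 1)"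
    using hint_bounded[OF K] hint_nonneg[OF K] assms by (auto simp: indicator_def)
  show "emeasure lborel {a..b} < \<infinity>" by (cases "a \<le> b") auto
qed (auto simp: indicator_def)

text \<open>The same in the Henstock--Kurzweil sense, where the fundamental theorem of calculus
  is most convenient.\<close>
lemma hint_integrable_on:
  assumes "K > 0" "-1 \<le> a" "b \<le> 1"
  shows "hint K integrable_on {a..b}"
  using set_borel_integral_eq_integral(1)[OF hint_set_integrable[OF assms]] .

lemma LBINT_hint_from_1:
  assumes K: "K > 0" and x: "-1 \<le> x" "x \<le> 1"
  shows "(LBINT w=ereal 1..ereal x. hint K w) = - hint_tail K x"
  unfolding hint_tail_def
  by (subst interval_integral_endpoints_reverse)
     (simp add: interval_integral_eq_integral[OF x(2) hint_set_integrable[OF K x(1) order.refl]])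

lemma LBINT_hint_lower_half:
  assumes "K > 0"
  shows "(LBINT w=ereal (-1)..ereal 0. hint K w) = integral {-1..0} (hint K)"
  by (rule interval_integral_eq_integral[OF _ hint_set_integrable[OF assms order.refl]]) auto

lemma hint_tail_continuous_on:
  assumes "K > 0"
  shows "continuous_on {-1..1} (hint_tail K)"
  unfolding hint_tail_def
  by (rule indefinite_integral_continuous_1'[OF hint_integrable_on[OF assms order.refl order.refl]])

lemma hint_tail_DERIV:
  assumes K: "K > 0" and x: "-1 < x" "x < 1"
  shows "(hint_tail K has_real_derivative - hint K x) (at x)"
proof -
  have I: "hint K integrable_on {-1..1}" by (rule hint_integrable_on[OF K]) auto
  have "continuous (at x) (hint K)"
    using hint_continuous_on[OF K] x by (simp add: continuous_on_eq_continuous_at)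
  then have "((\<lambda>y. integral {-1..y} (hint K)) has_vector_derivative hint K x) (at x within {-1..1})"
    using integral_has_vector_derivative_continuous_at[OF I, of x "{}"] x
    by (auto intro: continuous_at_imp_continuous_within)
  then have "((\<lambda>y. integral {-1..y} (hint K)) has_real_derivative hint K x) (at x)"
    using x by (simp add: at_within_Icc_at has_real_derivative_iff_has_vector_derivative)
  then have "((\<lambda>y. integral {-1..1} (hint K) - integral {-1..y} (hint K))
      has_real_derivative - hint K x) (at x)"
    by (auto intro!: derivative_eq_intros)
  then show ?thesis
  proof (rule has_field_derivative_transform_within_open[where S="{-1<..<1}"])
    fix y :: real assume "y \<in> {-1<..<1}"
    then show "integral {-1..1} (hint K) - integral {-1..y} (hint K) = hint_tail K y"
      unfolding hint_tail_def using Henstock_Kurzweil_Integration.integral_combine[OF _ _ I, of y] by auto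
  qed (use x in auto)
qed

text \<open>Evenness of the integrand: the tails at x and -x add up to twice
  the integral over the lower half {-1..0}.\<close>
lemma hint_tail_reflect:
  assumes K: "K > 0" and x: "-1 \<le> x" "x \<le> 1"
  shows "hint_tail K x + hint_tail K (-x) = 2 * integral {-1..0} (hint K)"
proof -
  have I: "hint K integrable_on {-1..1}" by (rule hint_integrable_on[OF K]) auto
  have reflect: "integral {-b..-a} (hint K) = integral {a..b} (hint K)" for a b
    using Henstock_Kurzweil_Integration.integral_reflect_real[of b a "hint K"] by (simp add: hint_even)
  have "integral {-1..x} (hint K) + integral {x..1} (hint K) = integral {-1..1} (hint K)"
    using Henstock_Kurzweil_Integration.integral_combine[OF x I] .
  moreover have "integral {-1..0} (hint K) + integral {0..1} (hint K) = integral {-1..1} (hint K)"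
    using Henstock_Kurzweil_Integration.integral_combine[OF _ _ I] by simp
  ultimately show ?thesis
    using reflect[where a="-x" and b=1] reflect[where a=0 and b=1] unfolding hint_tail_def by simp
qed

section \<open>Surfaces of revolution: reflection symmetry and injectivity\<close>

lemma rot_surface_reflection:
  assumes partner: "\<And>s. s \<in> A \<Longrightarrow> \<exists>s'\<in>A. k s' = k s \<and> h s' = 2 * c - h s"
  defines "S \<equiv> (\<lambda>(s, v). rot_param k h s v) ` (A \<times> UNIV)"
  shows "(\<lambda>(y1, y2, y3, y4). (y1, y2, y3, 2 * c - y4)) ` {p\<in>S. x4 p \<ge> c} = {p\<in>S. x4 p \<le> c}"
    (is "?\<sigma> ` ?upper = ?lower")
proof -
  have mem: "p \<in> S \<longleftrightarrow> (\<exists>s v. s \<in> A \<and> p = rot_param k h s v)" for p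
    unfolding S_def by force
  have reflect: "?\<sigma> (rot_param k h s v) = rot_param k h s' v"
    if "k s' = k s" "h s' = 2 * c - h s" for s s' v
    using that by (simp add: rot_param_def)
  have height: "x4 (rot_param k h s v) = h s" for s v
    by (simp add: rot_param_def x4_def)
  show ?thesis
  proof
    show "?\<sigma> ` ?upper \<subseteq> ?lower"
    proof
      fix q assume "q \<in> ?\<sigma> ` ?upper"
      then obtain p where p: "p \<in> S" "x4 p \<ge> c" "q = ?\<sigma> p" by blast
      then obtain s v where "s \<in> A" "p = rot_param k h s v" using mem by blast
      then have s: "s \<in> A" "h s \<ge> c" "q = ?\<sigma> (rot_param k h s v)"
        using p height by auto
      with partner obtain s' where "s' \<in> A" "k s' = k s" "h s' = 2 * c - h s" by blast
      then show "q \<in> ?lower" using s reflect mem height by auto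
    qed
    show "?lower \<subseteq> ?\<sigma> ` ?upper"
    proof
      fix p assume p: "p \<in> ?lower"
      then obtain s v where "s \<in> A" "p = rot_param k h s v" using mem by blast
      then have s: "s \<in> A" "h s \<le> c" "p = rot_param k h s v"
        using p height by auto
      with partner obtain s' where s': "s' \<in> A" "k s' = k s" "h s' = 2 * c - h s" by blast
      then have "rot_param k h s' v \<in> ?upper" using s mem height by auto
      moreover have "p = ?\<sigma> (rot_param k h s' v)" using reflect[of s s'] s s' by simp
      ultimately show "p \<in> ?\<sigma> ` ?upper" by blast
    qed
  qed
qed

lemma rot_param_eq_imp:
  assumes "inj_on h A" "s \<in> A" "s' \<in> A" "rot_param k h s v = rot_param k h s' v'"
  shows "s = s' \<and> (k s = 0 \<or> (\<exists>m::int. v' = v + 2 * pi * of_int m))"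
proof -
  have "h s = h s'" using assms(4) by (simp add: rot_param_def)
  then have s: "s' = s" using assms(1-3) by (simp add: inj_on_eq_iff)
  have "sinh (k s) * cos v = sinh (k s) * cos v'" "sinh (k s) * sin v = sinh (k s) * sin v'"
    using assms(4) unfolding s by (simp_all add: rot_param_def)
  then have "k s = 0 \<or> (sin v' = sin v \<and> cos v' = cos v)" by auto
  then show ?thesis using s sin_cos_eq_iff by blast
qed

locale rot_profile =
  fixes k h :: "real \<Rightarrow> real" and U :: "real set" and L :: real
  assumes open_U: "open U" and interval_U: "{0..L} \<subseteq> U"
    and smooth_k: "smooth_on U k" and smooth_h: "smooth_on U h"
    and arclen: "\<And>s. s \<in> {0..L} \<Longrightarrow> lor (d1 (rot_param k h) s 0) (d1 (rot_param k h) s 0) = 1"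
begin

lemmas k_DERIV = smooth_on_DERIV(1)[OF smooth_k]
  and k'_DERIV = smooth_on_DERIV(2)[OF smooth_k]
  and h_DERIV = smooth_on_DERIV(1)[OF smooth_h]
  and h'_DERIV = smooth_on_DERIV(2)[OF smooth_h]

lemma in_U: "s \<in> {0..L} \<Longrightarrow> s \<in> U"
  using interval_U by auto

lemma continuous_on_profile:
  "continuous_on {0..L} k" "continuous_on {0..L} (deriv k)"
  "continuous_on {0..L} h" "continuous_on {0..L} (deriv h)"
  using smooth_on_continuous_on[OF smooth_k interval_U] smooth_on_continuous_on[OF smooth_h interval_U]
  by auto

text \<open>Arc length: the Lorentzian speed reduces to u^2 + g^2 since
  cosh^2 - sinh^2 = 1.\<close>
lemma unit_speed:
  assumes s: "s \<in> {0..L}"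
  shows "(deriv k s)^2 + (deriv h s)^2 = 1"
proof -
  have "- ((sinh (k s) * deriv k s)^2) + (cosh (k s) * deriv k s)^2 + (deriv h s)^2 = 1"
    using arclen[OF s]
    by (simp add: d1_rot_param[OF k_DERIV h_DERIV in_U[OF s]] lor_def power2_eq_square)
  then show ?thesis by (simp add: power_mult_distrib cosh_square_eq algebra_simps)
qed

lemma meridian_frame:
  assumes s: "s \<in> U"
  shows "d1 (rot_param k h) s 0 = (sinh (k s) * deriv k s, cosh (k s) * deriv k s, 0, deriv h s)"
    and "d2 (rot_param k h) s 0 = (0, 0, sinh (k s), 0)"
    and "d1 (d1 (rot_param k h)) s 0 =
      (cosh (k s) * (deriv k s)^2 + sinh (k s) * deriv (deriv k) s,
       sinh (k s) * (deriv k s)^2 + cosh (k s) * deriv (deriv k) s, 0, deriv (deriv h) s)"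
    and "d2 (d1 (rot_param k h)) s 0 = (0, 0, cosh (k s) * deriv k s, 0)"
    and "d2 (d2 (rot_param k h)) s 0 = (0, - sinh (k s), 0, 0)"
    and "hpart (rot_param k h s 0) = (cosh (k s), sinh (k s), 0, 0)"
  using d1_rot_param[OF k_DERIV h_DERIV s] d2_rot_param d2d1_rot_param[OF k_DERIV h_DERIV s]
    d1d1_rot_param[OF k_DERIV h_DERIV k'_DERIV h'_DERIV open_U s] d2d2_rot_param
  by (simp_all add: rot_param_def hpart_def)

lemma unit_speed_deriv:
  assumes s: "s \<in> {0<..<L}"
  shows "deriv k s * deriv (deriv k) s + deriv h s * deriv (deriv h) s = 0"
proof -
  have sU: "s \<in> U" using s in_U by auto
  have "((\<lambda>t. (deriv k t)^2 + (deriv h t)^2) has_real_derivative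
      2 * deriv k s * deriv (deriv k) s + 2 * deriv h s * deriv (deriv h) s) (at s)"
    by (auto intro!: derivative_eq_intros k'_DERIV[OF sU] h'_DERIV[OF sU])
  moreover have "((\<lambda>t. (deriv k t)^2 + (deriv h t)^2) has_real_derivative 0) (at s)"
    by (rule has_field_derivative_transform_within_open[where S="{0<..<L}" and f="\<lambda>_. 1"])
       (use s unit_speed in auto)
  ultimately show ?thesis using DERIV_unique by fastforce
qed

end

section \<open>Spheres of revolution with constant extrinsic curvature\<close>

locale ext_curv_sphere = rot_profile +
  fixes K :: real
  assumes K_pos: "K > 0" and L_pos: "L > 0"
    and k_0: "k 0 = 0" and k_L: "k L = 0"
    and h'_0: "deriv h 0 = 0" and h'_L: "deriv h L = 0"
    and k_pos: "\<And>s. s \<in> {0<..<L} \<Longrightarrow> k s > 0"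
    and lowest: "\<And>s. s \<in> {0..L} \<Longrightarrow> h 0 \<le> h s"
    and curv: "\<And>s v. s \<in> {0<..<L} \<Longrightarrow> ext_curv_at (rot_param k h) s v K"
begin

lemma profile_ode:
  assumes s: "s \<in> {0<..<L}"
  shows "deriv (deriv k) s = - K * sinh (k s) / cosh (k s)"
proof -
  let ?\<psi> = "rot_param k h"
  define sh ch u g u' g' where "sh = sinh (k s)" and "ch = cosh (k s)"
    and "u = deriv k s" and "g = deriv h s" and "u' = deriv (deriv k) s" and "g' = deriv (deriv h) s"
  have sU: "s \<in> U" using s in_U by auto
  have sh: "sh > 0" "ch > 0" "ch^2 - sh^2 = 1"
    using k_pos[OF s] unfolding sh_def ch_def by (simp_all add: cosh_square_eq)
  note frame = meridian_frame[OF sU, folded sh_def ch_def u'_def g'_def u_def g_def]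
  note d1 = frame(1) and d2 = frame(2) and d1d1 = frame(3) and d2d1 = frame(4)
    and d2d2 = frame(5) and hp = frame(6)
  obtain N where N: "lor N N = 1" "lor N (d1 ?\<psi> s 0) = 0" "lor N (d2 ?\<psi> s 0) = 0"
    "lor N (hpart (?\<psi> s 0)) = 0"
    "(lor (d1 (d1 ?\<psi>) s 0) N * lor (d2 (d2 ?\<psi>) s 0) N - (lor (d2 (d1 ?\<psi>) s 0) N)^2) /
     (lor (d1 ?\<psi> s 0) (d1 ?\<psi> s 0) * lor (d2 ?\<psi> s 0) (d2 ?\<psi> s 0) - (lor (d1 ?\<psi> s 0) (d2 ?\<psi> s 0))^2) = K"
    using curv[OF s, of 0] unfolding ext_curv_at_def Let_def by blast
  obtain b n where Nbn: "N = (b * sh, b * ch, 0, n)"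
    using meridian_normal[of sh ch N] N(3,4) sh unfolding d2 hp by auto
  have "b^2 * (ch^2 - sh^2) + n^2 = 1" "b * u * (ch^2 - sh^2) + n * g = 0"
    using N(1,2) unfolding Nbn d1 by (simp_all add: lor_def power2_eq_square algebra_simps)
  then have unit_normal: "b^2 + n^2 = 1" and normal: "b * u + n * g = 0"
    using sh(3) by simp_all
  have "lor (d1 (d1 ?\<psi>) s 0) N = b * u' * (ch^2 - sh^2) + n * g'"
    unfolding Nbn d1d1 by (simp add: lor_def power2_eq_square algebra_simps)
  then have second_form: "lor (d1 (d1 ?\<psi>) s 0) N = b * u' + n * g'"
    "lor (d2 (d2 ?\<psi>) s 0) N = - b * ch * sh" "lor (d2 (d1 ?\<psi>) s 0) N = 0"
    using sh(3) unfolding Nbn d2d2 d2d1 by (simp_all add: lor_def)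
  have first_form: "lor (d1 ?\<psi> s 0) (d1 ?\<psi> s 0) = 1" "lor (d2 ?\<psi> s 0) (d2 ?\<psi> s 0) = sh^2"
    "lor (d1 ?\<psi> s 0) (d2 ?\<psi> s 0) = 0"
    using arclen[of s] s unfolding d1 d2 by (auto simp: lor_def power2_eq_square)
  have normal_curvature: "(b * u' + n * g') * b = u'"
    by (rule profile_normal_curvature[OF unit_normal normal])
       (use unit_speed s unit_speed_deriv[OF s] in \<open>auto simp: u_def g_def u'_def g'_def\<close>)
  have "lor (d1 (d1 ?\<psi>) s 0) N * lor (d2 (d2 ?\<psi>) s 0) N - (lor (d2 (d1 ?\<psi>) s 0) N)^2
      = (b * u' + n * g') * (- b * ch * sh)"
    unfolding second_form by simp
  also have "\<dots> = - ((b * u' + n * g') * b) * ch * sh" by (simp add: algebra_simps)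
  also have "\<dots> = - u' * ch * sh" unfolding normal_curvature ..
  finally have "- u' * ch * sh / sh^2 = K"
    using N(5) unfolding first_form by simp
  then show ?thesis
    using sh unfolding u'_def[symmetric] sh_def[symmetric] ch_def[symmetric]
    by (auto simp: field_simps power2_eq_square)
qed

lemma deriv_k_decreasing:
  assumes "a < b" "a \<in> {0..L}" "b \<in> {0..L}"
  shows "deriv k b < deriv k a"
proof (rule DERIV_neg_imp_decreasing_open[OF assms(1)])
  fix x assume x: "a < x" "x < b"
  then have xi: "x \<in> {0<..<L}" using assms by auto
  then have "deriv (deriv k) x < 0"
    using profile_ode[OF xi] k_pos[OF xi] K_pos by (simp add: divide_neg_pos)
  moreover have "x \<in> U" using in_U xi by auto
  ultimately show "\<exists>y. (deriv k has_real_derivative y) (at x) \<and> y < 0"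
    using k'_DERIV by blast
next
  show "continuous_on {a..b} (deriv k)"
    by (rule continuous_on_subset[OF continuous_on_profile(2)]) (use assms in auto)
qed

text \<open>At the poles the profile is horizontal, so u = \<plusminus>1 there; monotonicity
  fixes the signs.\<close>
lemma deriv_k_poles: "deriv k 0 = 1" "deriv k L = -1"
proof -
  have "deriv k 0 = 1 \<or> deriv k 0 = -1" "deriv k L = 1 \<or> deriv k L = -1"
    using unit_speed[of 0] unit_speed[of L] L_pos h'_0 h'_L by (auto simp: power2_eq_1_iff)
  moreover have "deriv k L < deriv k 0" using deriv_k_decreasing[of 0 L] L_pos by auto
  ultimately show "deriv k 0 = 1" "deriv k L = -1" by auto
qed

lemma deriv_k_range:
  "s \<in> {0..L} \<Longrightarrow> deriv k s \<in> {-1..1}"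
  "s \<in> {0<..<L} \<Longrightarrow> deriv k s \<in> {-1<..<1}"
  using deriv_k_decreasing[of 0 s] deriv_k_decreasing[of s L] deriv_k_poles
  by (cases "s = 0"; cases "s = L"; auto)+

text \<open>u is a valid parameter along the whole profile: by monotonicity and the
  intermediate value theorem it maps [0,L] bijectively onto [-1,1].\<close>
lemma deriv_k_bij: "bij_betw (deriv k) {0..L} {-1..1}"
  unfolding bij_betw_def
proof
  show "inj_on (deriv k) {0..L}"
    by (rule inj_onI) (metis deriv_k_decreasing less_irrefl linorder_neqE_linordered_idom)
  show "deriv k ` {0..L} = {-1..1}"
  proof
    show "deriv k ` {0..L} \<subseteq> {-1..1}" using deriv_k_range by auto
    show "{-1..1} \<subseteq> deriv k ` {0..L}"
    proof
      fix y :: real assume "y \<in> {-1..1}"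
      then have "deriv k L \<le> y" "y \<le> deriv k 0" using deriv_k_poles by auto
      from IVT2'[OF this _ continuous_on_profile(2)] L_pos
      obtain x where "0 \<le> x" "x \<le> L" "deriv k x = y" by auto
      then show "y \<in> deriv k ` {0..L}" by force
    qed
  qed
qed

text \<open>First integral of the ODE: ln (cosh k) + u^2 / (2 * K) is constant.\<close>
lemma cosh_k_formula:
  assumes s: "s \<in> {0..L}"
  shows "cosh (k s) = exp ((1 - (deriv k s)^2) / (2 * K))"
proof -
  define F where "F t = ln (cosh (k t)) + (deriv k t)^2 / (2 * K)" for t
  have "F s = F 0"
  proof (cases "s = 0")
    case False
    then have s0: "0 < s" using s by auto
    show ?thesis
    proof (rule DERIV_isconst_end[OF s0])
      show "continuous_on {0..s} F" unfolding F_def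
        using K_pos s continuous_on_subset[OF continuous_on_profile(1), of "{0..s}"]
          continuous_on_subset[OF continuous_on_profile(2), of "{0..s}"]
        by (auto intro!: continuous_intros simp: cosh_real_pos)
    next
      fix x assume "0 < x" "x < s"
      then have xi: "x \<in> {0<..<L}" using s by auto
      then have xU: "x \<in> U" using in_U by auto
      have "(F has_real_derivative deriv k x * (sinh (k x) / cosh (k x) +
          deriv (deriv k) x / K)) (at x)"
        unfolding F_def using K_pos
        by (auto intro!: derivative_eq_intros k_DERIV[OF xU] k'_DERIV[OF xU]
            simp: cosh_real_pos field_simps)
      then show "(F has_real_derivative 0) (at x)"
        using profile_ode[OF xi] K_pos by simp
    qed
  qed simp
  then have "ln (cosh (k s)) = (1 - (deriv k s)^2) / (2 * K)"
    unfolding F_def using deriv_k_poles k_0 by (simp add: diff_divide_distrib)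
  then show ?thesis by (metis cosh_real_pos exp_ln)
qed

lemma k_formula:
  assumes s: "s \<in> {0..L}"
  shows "k s = arcosh (exp ((1 - (deriv k s)^2) / (2 * K)))"
proof -
  have "k s \<ge> 0" using k_pos k_0 k_L s by (cases "s = 0 \<or> s = L") (auto simp: less_imp_le)
  then show ?thesis using cosh_k_formula[OF s] arcosh_cosh_real by metis
qed

text \<open>h' is positive in the interior: it never vanishes there (as |u| < 1), and a
  negative sign would push the profile below its lowest point.\<close>
lemma deriv_h_pos:
  assumes x: "x \<in> {0<..<L}"
  shows "deriv h x > 0"
proof -
  have nonzero: "deriv h y \<noteq> 0" if y: "y \<in> {0<..<L}" for y
  proof -
    have "(deriv k y)^2 < 1" using deriv_k_range(2)[OF y] by (simp add: abs_square_less_1 abs_less_iff)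
    then show ?thesis using unit_speed[of y] y by auto
  qed
  show ?thesis
  proof (rule ccontr)
    assume "\<not> deriv h x > 0"
    then have hx: "deriv h x < 0" using nonzero[OF x] by linarith
    have neg: "deriv h y < 0" if y: "0 < y" "y \<le> x" for y
    proof (rule ccontr)
      assume "\<not> deriv h y < 0"
      then have "deriv h y \<ge> 0" by simp
      moreover have "continuous_on {y..x} (deriv h)"
        by (rule continuous_on_subset[OF continuous_on_profile(4)]) (use y x in auto)
      ultimately obtain z where "y \<le> z" "z \<le> x" "deriv h z = 0"
        using IVT2'[of "deriv h" x 0 y] hx y by fastforce
      then show False using nonzero[of z] y x by auto
    qed
    have "h x < h 0"
    proof (rule DERIV_neg_imp_decreasing_open[of 0 x h])
      show "continuous_on {0..x} h"
        by (rule continuous_on_subset[OF continuous_on_profile(3)]) (use x in auto)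
      fix y assume "0 < y" "y < x"
      then show "\<exists>d. (h has_real_derivative d) (at y) \<and> d < 0"
        using h_DERIV[of y] in_U[of y] neg[of y] x by auto
    qed (use x in auto)
    then show False using lowest[of x] x by auto
  qed
qed

text \<open>With the unit-speed identity, h' = sqrt (1 - u^2) (also at the poles, where both
  sides vanish).\<close>
lemma deriv_h_formula:
  assumes s: "s \<in> {0..L}"
  shows "deriv h s = sqrt (1 - (deriv k s)^2)"
proof (cases "s = 0 \<or> s = L")
  case True
  then show ?thesis using h'_0 h'_L deriv_k_poles by auto
next
  case False
  then have "s \<in> {0<..<L}" using s by auto
  then show ?thesis
    using deriv_h_pos unit_speed[OF s] by (intro real_sqrt_unique[symmetric]) (auto simp: less_imp_le)
qed

lemma h_increasing:
  assumes "a < b" "a \<in> {0..L}" "b \<in> {0..L}"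
  shows "h a < h b"
proof (rule DERIV_pos_imp_increasing_open[OF assms(1)])
  fix x assume "a < x" "x < b"
  then have xi: "x \<in> {0<..<L}" using assms by auto
  then have "x \<in> U" using in_U by auto
  then show "\<exists>y. (h has_real_derivative y) (at x) \<and> y > 0"
    using h_DERIV deriv_h_pos[OF xi] by blast
next
  show "continuous_on {a..b} h"
    by (rule continuous_on_subset[OF continuous_on_profile(3)]) (use assms in auto)
qed

lemma hint_along_profile:
  assumes x: "x \<in> {0<..<L}"
  shows "hint K (deriv k x) = deriv h x * cosh (k x) / sinh (k x)"
proof -
  have xL: "x \<in> {0..L}" using x by auto
  define a where "a = (1 - (deriv k x)^2) / (2 * K)"
  have "- (1 - (deriv k x)^2) / K = - (2 * a)" unfolding a_def using K_pos by (simp add: field_simps)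
  then have "exp (- (1 - (deriv k x)^2) / K) = inverse ((cosh (k x))^2)"
    using cosh_k_formula[OF xL] unfolding a_def[symmetric] by (simp add: exp_minus exp_double)
  then have "1 - exp (- (1 - (deriv k x)^2) / K) = ((cosh (k x))^2 - 1) / (cosh (k x))^2"
    by (simp add: field_simps)
  also have "\<dots> = (sinh (k x))^2 / (cosh (k x))^2" by (simp add: cosh_square_eq)
  finally have "1 - exp (- (1 - (deriv k x)^2) / K) = (sinh (k x))^2 / (cosh (k x))^2" .
  then have "sqrt (1 - exp (- (1 - (deriv k x)^2) / K)) = sinh (k x) / cosh (k x)"
    using k_pos[OF x] by (simp add: real_sqrt_divide less_imp_le)
  then show ?thesis unfolding hint_def using deriv_h_formula[OF xL] by simp
qed

text \<open>The height formula: by the chain rule and the ODE,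
  h - (1/K) * hint_tail K (deriv k) has derivative zero.\<close>
lemma height_formula:
  assumes s: "s \<in> {0..L}"
  shows "h s = (1 / K) * hint_tail K (deriv k s) + h 0"
proof -
  define H where "H t = h t - (1 / K) * hint_tail K (deriv k t)" for t
  have "H s = H 0"
  proof (cases "s = 0")
    case False
    then have s0: "0 < s" using s by auto
    show ?thesis
    proof (rule DERIV_isconst_end[OF s0])
      have "continuous_on {0..s} (\<lambda>t. hint_tail K (deriv k t))"
        by (rule continuous_on_compose2[OF hint_tail_continuous_on[OF K_pos]
              continuous_on_subset[OF continuous_on_profile(2)]])
           (use s deriv_k_range in auto)
      moreover have "continuous_on {0..s} h"
        by (rule continuous_on_subset[OF continuous_on_profile(3)]) (use s in auto)
      ultimately show "continuous_on {0..s} H" unfolding H_def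
        by (intro continuous_on_diff continuous_on_mult_left)
    next
      fix x assume "0 < x" "x < s"
      then have xi: "x \<in> {0<..<L}" using s by auto
      then have xU: "x \<in> U" using in_U by auto
      have "(H has_real_derivative
          deriv h x - (1 / K) * (- hint K (deriv k x) * deriv (deriv k) x)) (at x)"
        unfolding H_def using deriv_k_range(2)[OF xi]
        by (intro derivative_intros h_DERIV[OF xU] DERIV_cmult
            DERIV_chain2[OF hint_tail_DERIV[OF K_pos] k'_DERIV[OF xU]]) auto
      moreover have "deriv h x - (1 / K) * (- hint K (deriv k x) * deriv (deriv k) x) = 0"
        unfolding hint_along_profile[OF xi] profile_ode[OF xi]
        using K_pos k_pos[OF xi] by (simp add: field_simps)
      ultimately show "(H has_real_derivative 0) (at x)" by simp
    qed
  qed simp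
  then show ?thesis unfolding H_def hint_tail_def using deriv_k_poles by simp
qed

text \<open>The height of the equatorial slice, where deriv k = 0.\<close>
definition equator_height :: real where
  "equator_height = (1 / K) * integral {-1..0} (hint K) + h 0"

text \<open>Mirror partners: the parameter with u replaced by -u has the same
  distance from the axis and the reflected height.\<close>
lemma mirror_partner:
  assumes s: "s \<in> {0..L}"
  shows "\<exists>s'\<in>{0..L}. k s' = k s \<and> h s' = 2 * equator_height - h s"
proof -
  obtain s' where s': "s' \<in> {0..L}" "deriv k s' = - deriv k s"
    using deriv_k_bij deriv_k_range(1)[OF s] unfolding bij_betw_def
    by (metis atLeastAtMost_iff imageE minus_le_iff neg_le_iff_le)
  have "k s' = k s" using k_formula[OF s'(1)] k_formula[OF s] s'(2) by simp
  moreover have "h s' = 2 * equator_height - h s"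
  proof -
    have "h s' + h s = (1 / K) * (hint_tail K (deriv k s) + hint_tail K (- deriv k s)) + 2 * h 0"
      using height_formula[OF s'(1)] height_formula[OF s] s'(2) by (simp add: algebra_simps)
    also have "\<dots> = 2 * equator_height"
      using hint_tail_reflect[OF K_pos, of "deriv k s"] deriv_k_range(1)[OF s]
      unfolding equator_height_def by (simp add: algebra_simps)
    finally show ?thesis by simp
  qed
  ultimately show ?thesis using s' by blast
qed

lemma symmetric_halves:
  defines "S \<equiv> (\<lambda>(s, v). rot_param k h s v) ` ({0..L} \<times> UNIV)"
  shows "(\<lambda>(y1, y2, y3, y4). (y1, y2, y3, 2 * equator_height - y4)) ` {p\<in>S. x4 p \<ge> equator_height}
      = {p\<in>S. x4 p \<le> equator_height}"
  unfolding S_def by (rule rot_surface_reflection[OF mirror_partner])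

text \<open>Embeddedness: the height separates parallels, and off the poles (k > 0) the angle
  is determined modulo 2 pi.\<close>
lemma embedded:
  assumes "s \<in> {0..L}" "s' \<in> {0..L}" "rot_param k h s v = rot_param k h s' v'"
  shows "s = s' \<and> (s = 0 \<or> s = L \<or> (\<exists>m::int. v' = v + 2 * pi * of_int m))"
proof -
  have "inj_on h {0..L}"
    by (rule inj_onI) (metis h_increasing linorder_neqE_linordered_idom less_irrefl)
  then show ?thesis using rot_param_eq_imp[OF _ assms] k_pos[of s] assms(1)
    by (cases "s = 0 \<or> s = L") auto
qed

end

theorem proposition5p1:
  fixes K L :: real and k h :: "real \<Rightarrow> real" and U :: "real set"
  defines "\<psi> \<equiv> rot_param k h"
  defines "S \<equiv> (\<lambda>(s,v). rot_param k h s v) ` ({0..L} \<times> UNIV)"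
  assumes Kpos: "K > 0"
    and Lpos: "L > 0"
    and U: "open U" "{0..L} \<subseteq> U"
    and smooth: "smooth_on U k" "smooth_on U h"
    \<comment> \<open>s is arc length of the generating curve alpha(s) = psi(s,0)\<close>
    and arclen: "\<forall>s\<in>{0..L}. lor (vector_derivative (\<lambda>t. \<psi> t 0) (at s))
                                  (vector_derivative (\<lambda>t. \<psi> t 0) (at s)) = 1"
    \<comment> \<open>sphere of revolution: the profile runs from the axis back to the axis,
        meeting it orthogonally (smooth closing at the poles)\<close>
    and poles: "k 0 = 0" "k L = 0" "deriv h 0 = 0" "deriv h L = 0"
    and kpos: "\<forall>s\<in>{0<..<L}. k s > 0"
    \<comment> \<open>s = 0 is the lowest point\<close>
    and lowest: "\<forall>s\<in>{0..L}. h 0 \<le> h s"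
    \<comment> \<open>constant extrinsic curvature K\<close>
    and curv: "\<forall>s\<in>{0<..<L}. \<forall>v. ext_curv_at \<psi> s v K"
  shows
    \<comment> \<open>S is embedded\<close>
    "(\<forall>s\<in>{0..L}. \<forall>s'\<in>{0..L}. \<forall>v v'. \<psi> s v = \<psi> s' v' \<longrightarrow>
        s = s' \<and> (s = 0 \<or> s = L \<or> (\<exists>m::int. v' = v + 2 * pi * of_int m)))
     \<and> bij_betw (deriv k) {0..L} {-1..1}
     \<and> (\<forall>s\<in>{0..L}. k s = arcosh (exp ((1 - (deriv k s)^2) / (2 * K))))
     \<and> (\<exists>C. (\<forall>s\<in>{0..L}. h s = - (1 / K) * (LBINT w=ereal 1..ereal (deriv k s). hint K w) + C)
          \<and> (let h0 = (1 / K) * (LBINT w=ereal (-1)..ereal 0. hint K w) + C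
             in (\<lambda>(y1,y2,y3,y4). (y1, y2, y3, 2 * h0 - y4)) ` {p\<in>S. x4 p \<ge> h0}
                  = {p\<in>S. x4 p \<le> h0}))"
proof -
  interpret ext_curv_sphere k h U L K
    using Kpos Lpos U smooth arclen poles kpos lowest curv
    by unfold_locales (auto simp: \<psi>_def d1_def)
  have height: "h s = - (1 / K) * (LBINT w=ereal 1..ereal (deriv k s). hint K w) + h 0"
    if "s \<in> {0..L}" for s
    using height_formula[OF that] LBINT_hint_from_1[OF Kpos] deriv_k_range(1)[OF that] by simp
  have slice: "equator_height = (1 / K) * (LBINT w=ereal (-1)..ereal 0. hint K w) + h 0"
    unfolding equator_height_def LBINT_hint_lower_half[OF Kpos] ..
  \<comment> \<open>the constant of integration is the height h 0 of the lowest point\<close>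
  show ?thesis
    unfolding \<psi>_def S_def Let_def
  proof (intro conjI exI[of _ "h 0"])
    show "\<forall>s\<in>{0..L}. \<forall>s'\<in>{0..L}. \<forall>v v'. rot_param k h s v = rot_param k h s' v' \<longrightarrow>
        s = s' \<and> (s = 0 \<or> s = L \<or> (\<exists>m::int. v' = v + 2 * pi * of_int m))"
      by (intro ballI allI impI embedded)
    show "\<forall>s\<in>{0..L}. k s = arcosh (exp ((1 - (deriv k s)^2) / (2 * K)))"
      by (intro ballI k_formula)
    show "\<forall>s\<in>{0..L}. h s = - (1 / K) * (LBINT w=ereal 1..ereal (deriv k s). hint K w) + h 0"
      by (intro ballI height)
  qed (rule deriv_k_bij symmetric_halves[unfolded slice])+
qed

end
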